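(* Let $G$ be a second countable locally compact group and $\Omega$ a homogeneous space of $G$. Let $F\subset P$ be closed subgroups of $G$, $Y\subset\Omega$ a compact $F$-minimal subset with $PY=Y$, and $M\subset G$ such that $mY\cap Y\neq\emptyset$ for every $m\in M$. Then $hY=Y$ for every $h\in N_G(F)\cap\overline{PMP}$.
   Context: $N_G(F)$ denotes the normalizer of $F$ in $G$. For a closed subgroup $F\subset G$, a closed $F$-invariant subset $Y\subset\Omega$ is called $F$-minimal if it contains no proper nonempty closed $F$-invariant subset, i.e. $Fy$ is dense in $Y$ for every $y\in Y$. *)

theory Defs
  imports "HOL-Analysis.Analysis" "HOL-Algebra.Group_Action"
begin

definition topological_group :: "('a, 'b) monoid_scheme \<Rightarrow> 'a topology \<Rightarrow> bool" where
  "topological_group G T \<longleftrightarrow>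
     group G \<and> topspace T = carrier G \<and> Hausdorff_space T \<and>
     continuous_map (prod_topology T T) T (\<lambda>(x, y). x \<otimes>\<^bsub>G\<^esub> y) \<and>
     continuous_map T T (\<lambda>x. inv\<^bsub>G\<^esub> x)"

text \<open>Action of g on the homogeneous space G/H (left cosets): g (xH) = (gx)H,
  extended to subsets Y of G/H.\<close>
definition coset_act :: "('a, 'b) monoid_scheme \<Rightarrow> 'a \<Rightarrow> 'a set set \<Rightarrow> 'a set set" where
  "coset_act G g Y = (\<lambda>C. g <#\<^bsub>G\<^esub> C) ` Y"

definition set_act :: "('a, 'b) monoid_scheme \<Rightarrow> 'a set \<Rightarrow> 'a set set \<Rightarrow> 'a set set" where
  "set_act G A Y = (\<Union>g\<in>A. coset_act G g Y)"

definition invariant_set :: "('a, 'b) monoid_scheme \<Rightarrow> 'a set \<Rightarrow> 'a set set \<Rightarrow> bool" where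
  "invariant_set G F Y \<longleftrightarrow> (\<forall>f\<in>F. coset_act G f Y \<subseteq> Y)"

definition minimal_set :: "('a, 'b) monoid_scheme \<Rightarrow> 'a set topology \<Rightarrow> 'a set \<Rightarrow> 'a set set \<Rightarrow> bool" where
  "minimal_set G X F Y \<longleftrightarrow>
     closedin X Y \<and> invariant_set G F Y \<and>
     (\<forall>Z. Z \<subseteq> Y \<and> Z \<noteq> {} \<and> closedin X Z \<and> invariant_set G F Z \<longrightarrow> Z = Y)"

end

theory Submission
  imports Defs
begin

text \<open>
  Let \<Omega> = G/H. For a subset Y of \<Omega> call R(Y) = {g \<in> G. gY \<inter> Y \<noteq> {}} the return set
  of Y. The proof has three ingredients.
  (1) If Y is compact and closed, R(Y) is closed in G: it is the projection to G of
      the closed set {(g, y). gy \<in> Y} \<subseteq> G \<times> Y, and projection along a compact factor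
      is a closed map. Continuity of the action G \<times> \<Omega> \<rightarrow> \<Omega> uses that
      id \<times> (G \<rightarrow> G/H) is a quotient map, which holds because G is locally compact.
  (2) If PY = Y and M \<subseteq> R(Y) then PMP \<subseteq> R(Y); by (1) also the closure of PMP
      lies in R(Y).
  (3) If Y is F-minimal and h normalises F, then hY is again a closed F-invariant
      set, so hY \<inter> Y \<noteq> {} forces Y \<subseteq> hY; applying this also to h\<inverse> gives hY = Y.
\<close>

definition return_set :: "('a, 'b) monoid_scheme \<Rightarrow> 'a set set \<Rightarrow> 'a set" where
  "return_set G Y = {g \<in> carrier G. coset_act G g Y \<inter> Y \<noteq> {}}"

lemma invariant_set_Int:
  assumes "invariant_set G F A" "invariant_set G F B"
  shows "invariant_set G F (A \<inter> B)"
  using assms unfolding invariant_set_def coset_act_def by blast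

context group
begin

lemma coset_act_mult:
  assumes "g \<in> carrier G" "k \<in> carrier G" "\<forall>C\<in>Y. C \<subseteq> carrier G"
  shows "coset_act G g (coset_act G k Y) = coset_act G (g \<otimes> k) Y"
  using assms unfolding coset_act_def by (force simp: image_image lcos_m_assoc)

lemma coset_act_inv_cancel:
  assumes "k \<in> carrier G" "\<forall>C\<in>Y. C \<subseteq> carrier G"
  shows "coset_act G (inv k) (coset_act G k Y) = Y"
proof -
  have "coset_act G (inv k) (coset_act G k Y) = coset_act G \<one> Y"
    using assms by (simp add: coset_act_mult)
  then show ?thesis
    using assms by (simp add: coset_act_def lcos_mult_one)
qed

lemma coset_act_cancel_inv:
  assumes "k \<in> carrier G" "\<forall>C\<in>Y. C \<subseteq> carrier G"
  shows "coset_act G k (coset_act G (inv k) Y) = Y"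
  using coset_act_inv_cancel[of "inv k" Y] assms by simp

lemma normalizer_conj:
  assumes "F \<subseteq> carrier G" "k \<in> normalizer G F" "f \<in> F"
  shows "k \<otimes> f \<otimes> inv k \<in> F"
proof -
  have "k <# F #> inv k = F"
    using assms unfolding normalizer_def stabilizer_def by auto
  moreover have "k \<otimes> f \<otimes> inv k \<in> k <# F #> inv k"
    using assms(3) unfolding l_coset_def r_coset_def by blast
  ultimately show ?thesis by simp
qed

text \<open>A translate of an F-invariant set by an element of the normaliser of F is
  again F-invariant, since f(kC) = k((k\<inverse>fk)C).\<close>

lemma normalizer_translate_invariant:
  assumes F: "F \<subseteq> carrier G" and k: "k \<in> normalizer G F"
    and inv: "invariant_set G F Y" and Y: "\<forall>C\<in>Y. C \<subseteq> carrier G"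
  shows "invariant_set G F (coset_act G k Y)"
  unfolding invariant_set_def
proof
  fix f assume f: "f \<in> F"
  have kc: "k \<in> carrier G" and fc: "f \<in> carrier G"
    using k f F unfolding normalizer_def stabilizer_def by auto
  have "inv k \<in> normalizer G F"
    using subgroup.m_inv_closed[OF normalizer_imp_subgroup[OF F] k] .
  from normalizer_conj[OF F this f] have conj: "inv k \<otimes> f \<otimes> k \<in> F"
    using kc by simp
  have "f \<otimes> k = k \<otimes> (inv k \<otimes> f \<otimes> k)"
    using kc fc by (simp add: m_assoc[symmetric])
  then have "coset_act G f (coset_act G k Y) = coset_act G k (coset_act G (inv k \<otimes> f \<otimes> k) Y)"
    using kc fc Y by (simp add: coset_act_mult)
  also have "\<dots> \<subseteq> coset_act G k Y"
    using inv conj unfolding invariant_set_def coset_act_def by blast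
  finally show "coset_act G f (coset_act G k Y) \<subseteq> coset_act G k Y" .
qed

lemma return_set_inv:
  assumes "g \<in> return_set G Y" "\<forall>C\<in>Y. C \<subseteq> carrier G"
  shows "inv g \<in> return_set G Y"
proof -
  have g: "g \<in> carrier G" using assms(1) unfolding return_set_def by blast
  obtain C where C: "C \<in> Y" "g <# C \<in> Y"
    using assms(1) unfolding return_set_def coset_act_def by blast
  have "inv g <# (g <# C) = C"
    using g C assms(2) by (simp add: lcos_m_assoc lcos_mult_one)
  then show ?thesis
    using g C unfolding return_set_def coset_act_def by force
qed

text \<open>If PY = Y, the return set is bi-invariant under P: for p, q \<in> P and
  mC \<in> Y one has (pmq)(q\<inverse>C) = p(mC) \<in> Y with q\<inverse>C \<in> Y.\<close>

lemma return_set_double_coset: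
  assumes P: "subgroup P G" and PY: "set_act G P Y = Y"
    and M: "M \<subseteq> return_set G Y" and Y: "\<forall>C\<in>Y. C \<subseteq> carrier G"
  shows "P <#> M <#> P \<subseteq> return_set G Y"
proof
  fix x assume "x \<in> P <#> M <#> P"
  then obtain p m q where pmq: "p \<in> P" "m \<in> M" "q \<in> P" and x: "x = p \<otimes> m \<otimes> q"
    unfolding set_mult_def by blast
  have Pact: "\<And>p C. p \<in> P \<Longrightarrow> C \<in> Y \<Longrightarrow> p <# C \<in> Y"
    using PY unfolding set_act_def coset_act_def by blast
  have pc: "p \<in> carrier G" "q \<in> carrier G" "m \<in> carrier G"
    using pmq M subgroup.subset[OF P] unfolding return_set_def by auto
  obtain C where C: "C \<in> Y" "m <# C \<in> Y"
    using M pmq(2) unfolding return_set_def coset_act_def by blast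
  have qC: "inv q <# C \<in> Y"
    using Pact[OF subgroup.m_inv_closed[OF P pmq(3)] C(1)] .
  have "x <# (inv q <# C) = (p \<otimes> m) <# C"
    using pc C Y x by (simp add: lcos_m_assoc m_assoc)
  also have "\<dots> = p <# (m <# C)"
    using pc C Y by (simp add: lcos_m_assoc)
  finally have "x <# (inv q <# C) \<in> Y" using Pact[OF pmq(1) C(2)] by simp
  then show "x \<in> return_set G Y"
    using qC pc x unfolding return_set_def coset_act_def by blast
qed

end

locale homogeneous_space = group +
  fixes T :: "'a topology" and H :: "'a set" and X :: "'a set topology"
  assumes topological_group: "topological_group G T"
    and locally_compact: "locally_compact_space T"
    and subgroup_H: "subgroup H G"
    and quotient: "quotient_map T X (\<lambda>g. g <# H)"
begin

lemma topspace_T: "topspace T = carrier G"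
  using topological_group unfolding topological_group_def by blast

lemma point_subset_carrier:
  assumes "C \<in> topspace X"
  shows "C \<subseteq> carrier G"
proof -
  have "topspace X = (\<lambda>g. g <# H) ` carrier G"
    using quotient topspace_T unfolding quotient_map_def by simp
  then show ?thesis
    using assms l_coset_subset_G[OF subgroup.subset[OF subgroup_H]] by blast
qed

text \<open>The action G \<times> X \<rightarrow> X is jointly continuous: composed with the quotient map
  id \<times> \<pi> it becomes (g, x) \<mapsto> \<pi>(gx), which is continuous.\<close>

lemma action_continuous: "continuous_map (prod_topology T X) X (\<lambda>(g, C). g <# C)"
proof (rule continuous_compose_quotient_map)
  have "Hausdorff_space T"
    using topological_group unfolding topological_group_def by blast
  then show "quotient_map (prod_topology T T) (prod_topology T X) (\<lambda>(x, y). (x, y <# H))"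
    using quotient_map_prod_right[OF locally_compact _ quotient] by blast
  have mult: "continuous_map (prod_topology T T) T (\<lambda>(x, y). x \<otimes> y)"
    using topological_group unfolding topological_group_def by blast
  have "continuous_map (prod_topology T T) X ((\<lambda>g. g <# H) \<circ> (\<lambda>(x, y). x \<otimes> y))"
    using continuous_map_compose[OF mult quotient_imp_continuous_map[OF quotient]] .
  then show "continuous_map (prod_topology T T) X ((\<lambda>(g, C). g <# C) \<circ> (\<lambda>(x, y). (x, y <# H)))"
    by (rule continuous_map_eq)
       (auto simp: topspace_T lcos_m_assoc subgroup.subset[OF subgroup_H])
qed

lemma translation_continuous:
  assumes "g \<in> carrier G"
  shows "continuous_map X X (\<lambda>C. g <# C)"
proof -
  have "continuous_map X (prod_topology T X) (\<lambda>C. (g, C))"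
    using assms topspace_T by (simp add: continuous_map_pairedI)
  from continuous_map_compose[OF this action_continuous] show ?thesis
    by (simp add: o_def)
qed

text \<open>Translates of closed sets are closed: kY is the preimage of Y under k\<inverse>.\<close>

lemma translate_closed:
  assumes k: "k \<in> carrier G" and Y: "closedin X Y"
  shows "closedin X (coset_act G k Y)"
proof -
  have Ysub: "\<forall>C\<in>Y. C \<subseteq> carrier G"
    using Y closedin_subset point_subset_carrier by blast
  have "coset_act G k Y = {C \<in> topspace X. inv k <# C \<in> Y}"
  proof (intro equalityI subsetI)
    fix C assume "C \<in> coset_act G k Y"
    then obtain D where D: "D \<in> Y" and C: "C = k <# D"
      unfolding coset_act_def by blast
    have "D \<in> topspace X" using D Y closedin_subset by blast
    then have "C \<in> topspace X"
      using C continuous_map_image_subset_topspace[OF translation_continuous[OF k]] by blast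
    moreover have "inv k <# C = D"
      using C D k Ysub by (simp add: lcos_m_assoc lcos_mult_one)
    ultimately show "C \<in> {C \<in> topspace X. inv k <# C \<in> Y}" using D by blast
  next
    fix C assume C: "C \<in> {C \<in> topspace X. inv k <# C \<in> Y}"
    then have "C = k <# (inv k <# C)"
      using k point_subset_carrier by (simp add: lcos_m_assoc lcos_mult_one)
    then show "C \<in> coset_act G k Y"
      using C unfolding coset_act_def by blast
  qed
  then show ?thesis
    using closedin_continuous_map_preimage[OF translation_continuous[OF inv_closed[OF k]] Y]
    by simp
qed

text \<open>The return set of a compact closed set is closed: it is the projection of a
  closed subset of G \<times> Y, and projection along the compact factor Y is closed.\<close>

lemma return_set_closed:
  assumes Yc: "compactin X Y" and Y: "closedin X Y"
  shows "closedin T (return_set G Y)"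
proof -
  define W where "W = {p \<in> topspace (prod_topology T (subtopology X Y)). (\<lambda>(g, C). g <# C) p \<in> Y}"
  have Ysub: "Y \<subseteq> topspace X" using Y closedin_subset by blast
  have "continuous_map (prod_topology T (subtopology X Y)) X (\<lambda>(g, C). g <# C)"
    using continuous_map_from_subtopology[OF action_continuous, of "topspace T \<times> Y"]
    by (simp add: subtopology_Times)
  then have "closedin (prod_topology T (subtopology X Y)) W"
    unfolding W_def by (rule closedin_continuous_map_preimage[OF _ Y])
  then have "closedin T (fst ` W)"
    using closed_map_fst[OF compact_space_subtopology[OF Yc]] closed_map_def by blast
  moreover have "fst ` W = return_set G Y"
  proof (intro equalityI subsetI)
    fix g assume "g \<in> fst ` W"
    then obtain C where "(g, C) \<in> W" by force
    then have "g \<in> carrier G" "C \<in> Y" "g <# C \<in> Y"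
      unfolding W_def using topspace_T Ysub by auto
    then show "g \<in> return_set G Y" unfolding return_set_def coset_act_def by blast
  next
    fix g assume "g \<in> return_set G Y"
    then obtain C where "g \<in> carrier G" "C \<in> Y" "g <# C \<in> Y"
      unfolding return_set_def coset_act_def by blast
    then have "(g, C) \<in> W" unfolding W_def using topspace_T Ysub by auto
    then show "g \<in> fst ` W" by force
  qed
  ultimately show ?thesis by simp
qed

text \<open>Key step: if Y is F-minimal and h normalises F with hY \<inter> Y \<noteq> {}, then
  hY \<inter> Y is a nonempty closed F-invariant subset of Y, hence equal to Y.\<close>

lemma minimal_translate_superset:
  assumes F: "F \<subseteq> carrier G" and Y: "minimal_set G X F Y"
    and h: "h \<in> normalizer G F" and ret: "h \<in> return_set G Y"
  shows "Y \<subseteq> coset_act G h Y"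
proof -
  have clY: "closedin X Y" and invY: "invariant_set G F Y"
    and min: "\<And>Z. Z \<subseteq> Y \<Longrightarrow> Z \<noteq> {} \<Longrightarrow> closedin X Z \<Longrightarrow> invariant_set G F Z \<Longrightarrow> Z = Y"
    using Y unfolding minimal_set_def by blast+
  have Ysub: "\<forall>C\<in>Y. C \<subseteq> carrier G"
    using closedin_subset[OF clY] point_subset_carrier by blast
  have hc: "h \<in> carrier G" using ret unfolding return_set_def by blast
  have "closedin X (coset_act G h Y \<inter> Y)"
    using closedin_Int[OF translate_closed[OF hc clY] clY] .
  moreover have "invariant_set G F (coset_act G h Y \<inter> Y)"
    using invariant_set_Int[OF normalizer_translate_invariant[OF F h invY Ysub] invY] .
  moreover have "coset_act G h Y \<inter> Y \<noteq> {}"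
    using ret unfolding return_set_def by blast
  ultimately have "coset_act G h Y \<inter> Y = Y" by (intro min) auto
  then show ?thesis by blast
qed

text \<open>Applying the key step to h and to h\<inverse> gives hY = Y.\<close>

lemma minimal_translate_eq:
  assumes F: "F \<subseteq> carrier G" and Y: "minimal_set G X F Y"
    and h: "h \<in> normalizer G F" and ret: "h \<in> return_set G Y"
  shows "coset_act G h Y = Y"
proof -
  have "closedin X Y" using Y unfolding minimal_set_def by blast
  then have Ysub: "\<forall>C\<in>Y. C \<subseteq> carrier G"
    using closedin_subset point_subset_carrier by blast
  have hc: "h \<in> carrier G" using ret unfolding return_set_def by blast
  have "inv h \<in> normalizer G F"
    using subgroup.m_inv_closed[OF normalizer_imp_subgroup[OF F] h] .
  then have "Y \<subseteq> coset_act G (inv h) Y"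
    using minimal_translate_superset[OF F Y] return_set_inv[OF ret Ysub] by blast
  then have "coset_act G h Y \<subseteq> coset_act G h (coset_act G (inv h) Y)"
    unfolding coset_act_def by blast
  also have "\<dots> = Y"
    by (rule coset_act_cancel_inv[OF hc Ysub])
  finally have "coset_act G h Y \<subseteq> Y" .
  with minimal_translate_superset[OF F Y h ret] show ?thesis by blast
qed

end

theorem corollary3p3:
  fixes G :: "('a, 'b) monoid_scheme" and T :: "'a topology"
    and H F P M :: "'a set" and X :: "'a set topology" and Y :: "'a set set"
  assumes "topological_group G T" and "locally_compact_space T" and "second_countable T"
    and "subgroup H G" and "closedin T H"
    and "quotient_map T X (\<lambda>g. g <#\<^bsub>G\<^esub> H)"
    and "subgroup F G" and "closedin T F"
    and "subgroup P G" and "closedin T P"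
    and "F \<subseteq> P"
    and "compactin X Y" and "minimal_set G X F Y"
    and "set_act G P Y = Y"
    and "M \<subseteq> carrier G"
    and "\<forall>m\<in>M. coset_act G m Y \<inter> Y \<noteq> {}"
  shows "\<forall>h \<in> normalizer G F \<inter> (T closure_of (P <#>\<^bsub>G\<^esub> M <#>\<^bsub>G\<^esub> P)).
           coset_act G h Y = Y"
proof -
  have "group G" using assms(1) unfolding topological_group_def by blast
  then interpret homogeneous_space G T H X
    using assms(1,2,4,6) by (simp add: homogeneous_space_def homogeneous_space_axioms_def)
  have clY: "closedin X Y" using assms(13) unfolding minimal_set_def by blast
  then have Ysub: "\<forall>C\<in>Y. C \<subseteq> carrier G"
    using closedin_subset point_subset_carrier by blast
  have "M \<subseteq> return_set G Y"
    using assms(15,16) unfolding return_set_def by blast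
  then have "P <#>\<^bsub>G\<^esub> M <#>\<^bsub>G\<^esub> P \<subseteq> return_set G Y"
    by (rule return_set_double_coset[OF assms(9,14) _ Ysub])
  then have closure: "T closure_of (P <#>\<^bsub>G\<^esub> M <#>\<^bsub>G\<^esub> P) \<subseteq> return_set G Y"
    by (rule closure_of_minimal[OF _ return_set_closed[OF assms(12) clY]])
  show ?thesis
  proof
    fix h assume "h \<in> normalizer G F \<inter> T closure_of (P <#>\<^bsub>G\<^esub> M <#>\<^bsub>G\<^esub> P)"
    then show "coset_act G h Y = Y"
      using minimal_translate_eq[OF subgroup.subset[OF assms(7)] assms(13)] closure by blast
  qed
qed

end
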